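(* Let $(x,y)$ be a random pair with values in $\mathcal{X}\times\{-1,+1\}$ with some distribution $P$ (so $\Pr\{x\in\mathcal{X}\}=1$). Let $f_\theta:\mathcal{X}\times\mathbb{R}\to\mathbb{R}$ satisfy the scalable-classifier assumption, and let $\bar\rho(x)$ denote the unique solution of $f_\theta(x,\bar\rho(x))=0$. Let $\mathcal{Z}_c=\{(x_i,y_i)\}_{i=1}^{n_c}$ be $n_c$ i.i.d. samples from $P$. Let $\varepsilon,\delta\in(0,1)$ and let $r$ be an integer with $1\le r\le n_c$ and $$\mathbf{B}(r-1;n_c,\varepsilon)\le\delta.$$ Let $\{\tilde x^U_j\}_{j=1}^{n_U}$ be the feature vectors of all samples in $\mathcal{Z}_c$ with label $-1$ (listed with multiplicity), define, when $n_U\ge r$, $$\rho_\varepsilon=\max{}^{(r)}\big(\{\bar\rho(\tilde x^U_j)\}_{j=1}^{n_U}\big),$$ and define $\mathcal{S}_\varepsilon=\{x\in\mathcal{X}: f_\theta(x,\rho_\varepsilon)<0\}$ if $n_U\ge r$ and $\mathcal{S}_\varepsilon=\mathcal{X}$ otherwise. Then, with probability at least $1-\delta$ with respect to the draw of $\mathcal{Z}_c$, $$\Pr_{(x,y)\sim P}\{y=-1\ \text{and}\ x\in\mathcal{S}_\varepsilon\}\le\varepsilon,$$ where $(x,y)$ is drawn independently of $\mathcal{Z}_c$.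
   Context: Scalable-classifier assumption: for every $x\in\mathcal{X}$, the map $\rho\mapsto f_\theta(x,\rho)$ is continuous and strictly increasing, and $\lim_{\rho\to-\infty}f_\theta(x,\rho)<0<\lim_{\rho\to+\infty}f_\theta(x,\rho)$ (under this assumption $\bar\rho(x)$ exists and is unique). Binomial CDF: $\mathbf{B}(k;n,\varepsilon)=\sum_{i=0}^{k}\binom{n}{i}\varepsilon^i(1-\varepsilon)^{n-i}$. Generalized max: for a finite collection $\Gamma=\{\gamma_i\}_{i=1}^n$ of reals and integer $r\in\{1,\dots,n\}$, order it as $\gamma_{(1)}\ge\gamma_{(2)}\ge\dots\ge\gamma_{(n)}$ and set $\max^{(r)}(\Gamma)=\gamma_{(r)}$ (the $r$-th largest value, counting multiplicity). *)

theory Defs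
  imports "HOL-Probability.Probability"
begin

definition binom_cdf :: "nat \<Rightarrow> nat \<Rightarrow> real \<Rightarrow> real" where
  "binom_cdf k n eps = (\<Sum>i=0..k. real (n choose i) * eps ^ i * (1 - eps) ^ (n - i))"

definition gen_max :: "nat \<Rightarrow> real list \<Rightarrow> real" where
  "gen_max r xs = rev (sort xs) ! (r - 1)"

definition scalable_classifier :: "'a set \<Rightarrow> ('a \<Rightarrow> real \<Rightarrow> real) \<Rightarrow> bool" where
  "scalable_classifier X f \<longleftrightarrow>
     (\<forall>x\<in>X. continuous_on UNIV (f x) \<and> strict_mono (f x) \<and>
        Lim at_bot (\<lambda>\<rho>. ereal (f x \<rho>)) < 0 \<and> 0 < Lim at_top (\<lambda>\<rho>. ereal (f x \<rho>)))"

definition rho_bar :: "('a \<Rightarrow> real \<Rightarrow> real) \<Rightarrow> 'a \<Rightarrow> real" where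
  "rho_bar f x = (THE \<rho>. f x \<rho> = 0)"

definition neg_features :: "nat \<Rightarrow> (nat \<Rightarrow> 'a \<times> int) \<Rightarrow> 'a list" where
  "neg_features nc Z = map (\<lambda>i. fst (Z i)) (filter (\<lambda>i. snd (Z i) = -1) [0..<nc])"

definition S_eps :: "'a set \<Rightarrow> ('a \<Rightarrow> real \<Rightarrow> real) \<Rightarrow> nat \<Rightarrow> nat \<Rightarrow> (nat \<Rightarrow> 'a \<times> int) \<Rightarrow> 'a set" where
  "S_eps X f r nc Z =
     (if length (neg_features nc Z) \<ge> r
      then {x\<in>X. f x (gen_max r (map (rho_bar f) (neg_features nc Z))) < 0}
      else X)"

end

theory Submission
  imports Defs
begin

text \<open>
  Let \<open>R x = rho_bar f x\<close> be the score of a feature; for \<open>x\<close> with label \<open>-1\<close>, \<open>x \<in> S_eps\<close>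
  means \<open>R x > \<rho>\<^sub>\<epsilon>\<close>, where \<open>\<rho>\<^sub>\<epsilon>\<close> is the \<open>r\<close>-th largest score among the negative calibration
  samples. If \<open>P{y = -1} \<le> \<epsilon>\<close> there is nothing to prove. Otherwise pick an upper quantile \<open>t\<close>
  of the score on the negative class, \<open>P{y = -1, R > t} \<le> \<epsilon> \<le> P{y = -1, R \<ge> t}\<close>. Whenever
  at least \<open>r\<close> calibration samples fall into \<open>E = {y = -1, R \<ge> t}\<close>, we get \<open>\<rho>\<^sub>\<epsilon> \<ge> t\<close> and
  hence \<open>P{y = -1, x \<in> S_eps} \<le> P{y = -1, R > t} \<le> \<epsilon>\<close>. The number of samples in \<open>E\<close> is
  binomial with success probability \<open>P E \<ge> \<epsilon>\<close>, so it is below \<open>r\<close> with probability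
  \<open>B(r - 1; n\<^sub>c, P E) \<le> B(r - 1; n\<^sub>c, \<epsilon>) \<le> \<delta>\<close>.
\<close>

lemma sum_subsets_card_le:
  fixes g :: "nat \<Rightarrow> 'b::comm_semiring_1"
  assumes "finite A"
  shows "(\<Sum>S | S \<subseteq> A \<and> card S \<le> k. g (card S)) = (\<Sum>j=0..k. of_nat (card A choose j) * g j)"
proof -
  have fin: "finite {S. S \<subseteq> A \<and> card S \<le> k}"
    using assms by (simp add: finite_subset[of _ "Pow A"] subset_eq)
  have "(\<Sum>S | S \<subseteq> A \<and> card S \<le> k. g (card S))
      = (\<Sum>j=0..k. \<Sum>S | S \<subseteq> A \<and> card S \<le> k \<and> card S = j. g (card S))"
    by (subst sum.group[symmetric, OF fin finite_atLeastAtMost, of card 0 k]) auto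
  also have "\<dots> = (\<Sum>j=0..k. of_nat (card A choose j) * g j)"
  proof (intro sum.cong refl)
    fix j assume "j \<in> {0..k}"
    then have "{S. S \<subseteq> A \<and> card S \<le> k \<and> card S = j} = {S. S \<subseteq> A \<and> card S = j}"
      by auto
    then show "(\<Sum>S | S \<subseteq> A \<and> card S \<le> k \<and> card S = j. g (card S)) = of_nat (card A choose j) * g j"
      using assms by (simp add: n_subsets)
  qed
  finally show ?thesis .
qed

lemma PiM_hits_eq_PiE:
  assumes "E \<subseteq> space M" "S \<subseteq> I"
  shows "{Z \<in> space (PiM I (\<lambda>_. M)). {i\<in>I. Z i \<in> E} = S}
       = PiE I (\<lambda>i. if i \<in> S then E else space M - E)"
  using assms by (auto simp: space_PiM PiE_iff extensional_def split: if_splits) blast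

lemma measure_PiM_hits_eq:
  assumes "prob_space M" "E \<in> sets M" "finite I" "S \<subseteq> I"
  shows "measure (PiM I (\<lambda>_. M)) {Z \<in> space (PiM I (\<lambda>_. M)). {i\<in>I. Z i \<in> E} = S}
       = measure M E ^ card S * (1 - measure M E) ^ (card I - card S)"
proof -
  interpret prob_space M by fact
  interpret \<Pi>: finite_product_prob_space "\<lambda>_. M" I
    using assms(1,3) product_prob_spaceI[of "\<lambda>_. M"]
    by (simp add: finite_product_prob_space_def finite_product_sigma_finite_def
        finite_product_sigma_finite_axioms_def product_prob_space_def)
  have "measure (PiM I (\<lambda>_. M)) {Z \<in> space (PiM I (\<lambda>_. M)). {i\<in>I. Z i \<in> E} = S}
      = (\<Prod>i\<in>I. if i \<in> S then measure M E else 1 - measure M E)"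
    using assms sets.sets_into_space[OF \<open>E \<in> sets M\<close>]
    by (simp add: PiM_hits_eq_PiE \<Pi>.finite_measure_PiM_emb if_distrib prob_compl cong: prod.cong if_cong)
  also have "\<dots> = measure M E ^ card S * (1 - measure M E) ^ (card I - card S)"
    using assms by (simp add: prod.If_cases Int_absorb1 Diff_eq[symmetric] card_Diff_subset finite_subset)
  finally show ?thesis .
qed

lemma
  assumes "prob_space M" "E \<in> sets M" "finite I"
  shows sets_PiM_card_hits_le:
      "{Z \<in> space (PiM I (\<lambda>_. M)). card {i\<in>I. Z i \<in> E} \<le> k} \<in> sets (PiM I (\<lambda>_. M))"
    and measure_PiM_card_hits_le:
      "measure (PiM I (\<lambda>_. M)) {Z \<in> space (PiM I (\<lambda>_. M)). card {i\<in>I. Z i \<in> E} \<le> k}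
       = binom_cdf k (card I) (measure M E)"
proof -
  interpret \<Pi>: prob_space "PiM I (\<lambda>_. M)" by (rule prob_space_PiM) (use assms in auto)
  let ?H = "\<lambda>S. {Z \<in> space (PiM I (\<lambda>_. M)). {i\<in>I. Z i \<in> E} = S}"
  let ?\<S> = "{S. S \<subseteq> I \<and> card S \<le> k}"
  have fin: "finite ?\<S>"
    using assms by (simp add: finite_subset[of _ "Pow I"] subset_eq)
  have H_sets: "?H S \<in> sets (PiM I (\<lambda>_. M))" if "S \<subseteq> I" for S
    using assms that sets.sets_into_space[OF assms(2)]
    by (subst PiM_hits_eq_PiE) (auto intro!: sets_PiM_I_finite)
  have B_eq: "{Z \<in> space (PiM I (\<lambda>_. M)). card {i\<in>I. Z i \<in> E} \<le> k} = (\<Union>S\<in>?\<S>. ?H S)"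
    by auto
  show "{Z \<in> space (PiM I (\<lambda>_. M)). card {i\<in>I. Z i \<in> E} \<le> k} \<in> sets (PiM I (\<lambda>_. M))"
    unfolding B_eq using fin H_sets by auto
  have "measure (PiM I (\<lambda>_. M)) (\<Union>S\<in>?\<S>. ?H S) = (\<Sum>S\<in>?\<S>. measure (PiM I (\<lambda>_. M)) (?H S))"
    using fin H_sets by (intro \<Pi>.finite_measure_finite_Union) (auto simp: disjoint_family_on_def)
  also have "\<dots> = (\<Sum>S\<in>?\<S>. measure M E ^ card S * (1 - measure M E) ^ (card I - card S))"
    using assms by (intro sum.cong refl measure_PiM_hits_eq) auto
  also have "\<dots> = binom_cdf k (card I) (measure M E)"
    using sum_subsets_card_le[OF assms(3), where k = k and g = "\<lambda>j. measure M E ^ j * (1 - measure M E) ^ (card I - j)"]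
    by (simp add: binom_cdf_def mult.assoc)
  finally show "measure (PiM I (\<lambda>_. M)) {Z \<in> space (PiM I (\<lambda>_. M)). card {i\<in>I. Z i \<in> E} \<le> k}
       = binom_cdf k (card I) (measure M E)"
    unfolding B_eq .
qed

text \<open>Coupling: for samples that are uniform on \<open>[0, 1]\<close>, at most \<open>k\<close> hits of \<open>[0, p]\<close>
  imply at most \<open>k\<close> hits of the smaller interval \<open>[0, q]\<close>.\<close>

lemma binom_cdf_antimono:
  assumes "0 \<le> q" "q \<le> p" "p \<le> 1"
  shows "binom_cdf k n p \<le> binom_cdf k n q"
proof -
  define U where "U = uniform_measure lborel {0..1::real}"
  have U: "prob_space U"
    unfolding U_def by (rule prob_space_uniform_measure) auto
  have measure_U: "measure U {0..x} = x" if "0 \<le> x" "x \<le> 1" for x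
    using that by (simp add: U_def Int_absorb1)
  have sets_U: "{0..x} \<in> sets U" for x
    by (simp add: U_def)
  let ?B = "\<lambda>x. {Z \<in> space (PiM {..<n} (\<lambda>_. U)). card {i\<in>{..<n}. Z i \<in> {0..x}} \<le> k}"
  interpret \<Pi>: prob_space "PiM {..<n} (\<lambda>_. U)" by (rule prob_space_PiM) (rule U)
  have "?B p \<subseteq> ?B q"
    using assms by (auto elim!: le_trans[rotated] intro!: card_mono)
  then have "measure (PiM {..<n} (\<lambda>_. U)) (?B p) \<le> measure (PiM {..<n} (\<lambda>_. U)) (?B q)"
    by (intro \<Pi>.finite_measure_mono sets_PiM_card_hits_le[OF U sets_U]) auto
  moreover have "binom_cdf k n x = measure (PiM {..<n} (\<lambda>_. U)) (?B x)" if "0 \<le> x" "x \<le> 1" for x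
    using measure_PiM_card_hits_le[OF U sets_U, where I = "{..<n}" and k = k] measure_U[OF that] by simp
  ultimately show ?thesis
    using assms by simp
qed

lemma
  assumes "prob_space M" "E \<in> sets M" "finite I" "1 \<le> r" "0 \<le> eps" "eps \<le> measure M E"
  shows sets_PiM_card_hits_ge:
      "{Z \<in> space (PiM I (\<lambda>_. M)). r \<le> card {i\<in>I. Z i \<in> E}} \<in> sets (PiM I (\<lambda>_. M))"
    and measure_PiM_card_hits_ge:
      "1 - binom_cdf (r - 1) (card I) eps
       \<le> measure (PiM I (\<lambda>_. M)) {Z \<in> space (PiM I (\<lambda>_. M)). r \<le> card {i\<in>I. Z i \<in> E}}"
proof -
  interpret prob_space M by fact
  interpret \<Pi>: prob_space "PiM I (\<lambda>_. M)" by (rule prob_space_PiM) (use assms in auto)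
  let ?G = "{Z \<in> space (PiM I (\<lambda>_. M)). card {i\<in>I. Z i \<in> E} \<le> r - 1}"
  have G_sets: "?G \<in> sets (PiM I (\<lambda>_. M))"
    using assms(1-3) by (rule sets_PiM_card_hits_le)
  have compl: "{Z \<in> space (PiM I (\<lambda>_. M)). r \<le> card {i\<in>I. Z i \<in> E}} = space (PiM I (\<lambda>_. M)) - ?G"
    using assms(4) by auto
  show "{Z \<in> space (PiM I (\<lambda>_. M)). r \<le> card {i\<in>I. Z i \<in> E}} \<in> sets (PiM I (\<lambda>_. M))"
    unfolding compl using G_sets by auto
  have "binom_cdf (r - 1) (card I) (measure M E) \<le> binom_cdf (r - 1) (card I) eps"
    using assms(5,6) by (intro binom_cdf_antimono) auto
  then show "1 - binom_cdf (r - 1) (card I) eps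
       \<le> measure (PiM I (\<lambda>_. M)) {Z \<in> space (PiM I (\<lambda>_. M)). r \<le> card {i\<in>I. Z i \<in> E}}"
    unfolding compl \<Pi>.prob_compl[OF G_sets] measure_PiM_card_hits_le[OF assms(1-3)] by linarith
qed

lemma gen_max_ge:
  fixes xs :: "real list"
  assumes "1 \<le> r" and "r \<le> length (filter (\<lambda>v. t \<le> v) xs)"
  shows "t \<le> gen_max r xs"
proof (rule ccontr)
  assume "\<not> t \<le> gen_max r xs"
  then have below: "rev (sort xs) ! (r - 1) < t"
    by (simp add: gen_max_def)
  let ?ys = "rev (sort xs)"
  have "\<forall>v\<in>set (drop (r - 1) ?ys). v < t"
  proof
    fix v assume "v \<in> set (drop (r - 1) ?ys)"
    then obtain i where i: "i < length ?ys - (r - 1)" and v: "v = ?ys ! (r - 1 + i)"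
      by (auto simp: in_set_conv_nth)
    have "?ys ! (r - 1 + i) \<le> ?ys ! (r - 1)"
      using i by (intro sorted_rev_nth_mono) auto
    then show "v < t"
      using v below by simp
  qed
  then have "filter (\<lambda>v. t \<le> v) (drop (r - 1) ?ys) = []"
    by (auto simp: filter_empty_conv not_le)
  then have "length (filter (\<lambda>v. t \<le> v) ?ys) = length (filter (\<lambda>v. t \<le> v) (take (r - 1) ?ys))"
    by (metis append_Nil2 append_take_drop_id filter_append)
  also have "\<dots> \<le> r - 1"
    using length_filter_le[of _ "take (r - 1) ?ys"] by simp
  finally show False
    using assms by (simp add: rev_filter[symmetric] filter_sort)
qed

lemma mono_tendsto_SUP_at_top:
  fixes g :: "'a::linorder \<Rightarrow> 'b::{complete_linorder, linorder_topology}"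
  assumes "mono g"
  shows "(g \<longlongrightarrow> (SUP x. g x)) at_top"
proof (rule increasing_tendsto)
  show "\<forall>\<^sub>F x in at_top. g x \<le> (SUP x. g x)"
    by (simp add: SUP_upper)
  fix y assume "y < (SUP x. g x)"
  then obtain a where "y < g a"
    by (auto simp: less_SUP_iff)
  then show "\<forall>\<^sub>F x in at_top. y < g x"
    using assms unfolding eventually_at_top_linorder by (meson less_le_trans monoD)
qed

lemma mono_tendsto_INF_at_bot:
  fixes g :: "'a::linorder \<Rightarrow> 'b::{complete_linorder, linorder_topology}"
  assumes "mono g"
  shows "(g \<longlongrightarrow> (INF x. g x)) at_bot"
proof (rule decreasing_tendsto)
  show "\<forall>\<^sub>F x in at_bot. (INF x. g x) \<le> g x"
    by (simp add: INF_lower)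
  fix y assume "(INF x. g x) < y"
  then obtain a where "g a < y"
    by (auto simp: INF_less_iff)
  then show "\<forall>\<^sub>F x in at_bot. g x < y"
    using assms unfolding eventually_at_bot_linorder by (meson le_less_trans monoD)
qed

text \<open>\<open>Lim\<close> is a definite description, so the hypotheses on the limits only say something
  once the limits are known to exist; for monotone functions they are \<open>INF\<close> and \<open>SUP\<close>.\<close>

lemma scalable_classifier_neg_iff:
  assumes "scalable_classifier X f" and "x \<in> X"
  shows "f x t < 0 \<longleftrightarrow> t < rho_bar f x"
proof -
  have cont: "continuous_on UNIV (f x)" and sm: "strict_mono (f x)"
    and bot: "Lim at_bot (\<lambda>\<rho>. ereal (f x \<rho>)) < 0" and top: "0 < Lim at_top (\<lambda>\<rho>. ereal (f x \<rho>))"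
    using assms unfolding scalable_classifier_def by auto
  have mono: "mono (\<lambda>\<rho>. ereal (f x \<rho>))"
    using strict_mono_mono[OF sm] by (simp add: mono_def)
  have "Lim at_bot (\<lambda>\<rho>. ereal (f x \<rho>)) = (INF \<rho>. ereal (f x \<rho>))"
    by (intro tendsto_Lim mono_tendsto_INF_at_bot mono) simp
  then obtain a where a: "f x a < 0"
    using bot by (auto simp: INF_less_iff)
  have "Lim at_top (\<lambda>\<rho>. ereal (f x \<rho>)) = (SUP \<rho>. ereal (f x \<rho>))"
    by (intro tendsto_Lim mono_tendsto_SUP_at_top mono) simp
  then obtain b where b: "0 < f x b"
    using top by (auto simp: less_SUP_iff)
  have "a \<le> b"
    using a b strict_mono_less[OF sm, of b a] by linarith
  then obtain c where c: "f x c = 0"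
    using IVT[of "f x" a 0 b] a b cont by (auto simp: continuous_on_eq_continuous_at)
  then have "rho_bar f x = c"
    unfolding rho_bar_def by (intro the_equality) (metis c strict_mono_eq[OF sm])+
  then show ?thesis
    using c strict_mono_less[OF sm, of t c] by simp
qed

lemma length_filter_map_neg_features:
  "length (filter P (map g (neg_features nc Z)))
   = card {i\<in>{..<nc}. snd (Z i) = -1 \<and> P (g (fst (Z i)))}"
  unfolding neg_features_def
  by (simp add: filter_map comp_def length_filter_conv_card cong: conj_cong)

lemma S_eps_above_threshold:
  assumes "scalable_classifier X f" and "1 \<le> r"
    and "\<And>z. z \<in> E \<Longrightarrow> snd z = -1 \<and> t \<le> rho_bar f (fst z)"
    and "r \<le> card {i\<in>{..<nc}. Z i \<in> E}"
    and "x \<in> S_eps X f r nc Z"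
  shows "t < rho_bar f x"
proof -
  let ?\<rho>s = "map (rho_bar f) (neg_features nc Z)"
  have "card {i\<in>{..<nc}. Z i \<in> E} \<le> card {i\<in>{..<nc}. snd (Z i) = -1 \<and> t \<le> rho_bar f (fst (Z i))}"
    by (intro card_mono) (auto dest: assms(3))
  then have count: "r \<le> length (filter (\<lambda>v. t \<le> v) ?\<rho>s)"
    unfolding length_filter_map_neg_features using assms(4) by linarith
  then have "r \<le> length (neg_features nc Z)"
    using length_filter_le[of _ ?\<rho>s] by (metis le_trans length_map)
  then have "x \<in> X" and "f x (gen_max r ?\<rho>s) < 0"
    using assms(5) by (auto simp: S_eps_def)
  moreover have "t \<le> gen_max r ?\<rho>s"
    using gen_max_ge[OF assms(2) count] .
  ultimately show ?thesis
    using scalable_classifier_neg_iff[OF assms(1)] by (meson le_less_trans)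
qed

lemma borel_measurable_rho_bar:
  assumes "scalable_classifier (space M) f" and "\<And>\<rho>. (\<lambda>x. f x \<rho>) \<in> borel_measurable M"
  shows "rho_bar f \<in> borel_measurable M"
proof (rule borel_measurableI_greater)
  fix t
  have "{x \<in> space M. t < rho_bar f x} = {x \<in> space M. f x t < 0}"
    using scalable_classifier_neg_iff[OF assms(1)] by auto
  also have "\<dots> \<in> sets M"
    using borel_measurable_less[OF assms(2) borel_measurable_const] by simp
  finally show "{x \<in> space M. t < rho_bar f x} \<in> sets M" .
qed

text \<open>Take \<open>t\<close> to be the infimum of the points where the cdf reaches \<open>measure M (space M) - eps\<close>:
  right-continuity of the cdf gives the first bound, its left limit at \<open>t\<close> the second.\<close>

lemma (in finite_borel_measure) ex_upper_quantile:
  assumes "0 < eps" and "eps < measure M (space M)"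
  shows "\<exists>t. measure M {t<..} \<le> eps \<and> eps \<le> measure M {t..}"
proof -
  define c where "c = measure M (space M) - eps"
  define T where "T = {x. c \<le> cdf M x}"
  have "\<forall>\<^sub>F x in at_top. c < cdf M x"
    using order_tendstoD(1)[OF cdf_lim_at_top, of c] assms(1) unfolding c_def by simp
  then obtain x1 where "c < cdf M x1"
    by (metis eventually_at_top_linorder order_refl)
  then have T_ne: "T \<noteq> {}"
    unfolding T_def by (blast intro: less_imp_le)
  have "\<forall>\<^sub>F x in at_bot. cdf M x < c"
    using order_tendstoD(2)[OF cdf_lim_at_bot, of c] assms(2) unfolding c_def by simp
  then obtain x0 where x0: "\<And>x. x \<le> x0 \<Longrightarrow> cdf M x < c"
    by (auto simp: eventually_at_bot_linorder)
  have T_bdd: "bdd_below T"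
  proof (rule bdd_belowI)
    fix x assume "x \<in> T"
    then show "x0 \<le> x"
      using x0[of x] unfolding T_def by (metis linear mem_Collect_eq not_le)
  qed
  define t where "t = Inf T"
  have "c \<le> cdf M t"
  proof (rule tendsto_lowerbound)
    show "(cdf M \<longlongrightarrow> cdf M t) (at_right t)"
      using cdf_is_right_cont by (simp add: continuous_within)
    show "\<forall>\<^sub>F x in at_right t. c \<le> cdf M x"
    proof (rule eventually_at_rightI[of t "t + 1"])
      fix x assume "x \<in> {t<..<t + 1}"
      then obtain y where "y \<in> T" "y < x"
        using cInf_less_iff[OF T_ne T_bdd] unfolding t_def by auto
      then show "c \<le> cdf M x"
        unfolding T_def using cdf_nondecreasing[of y x] by simp
    qed simp
  qed simp
  moreover have "measure M {..<t} \<le> c"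
  proof (rule tendsto_upperbound)
    show "(cdf M \<longlongrightarrow> measure M {..<t}) (at_left t)"
      by (rule cdf_at_left)
    show "\<forall>\<^sub>F x in at_left t. cdf M x \<le> c"
    proof (rule eventually_at_leftI[of "t - 1" t])
      fix x assume "x \<in> {t - 1<..<t}"
      then have "x \<notin> T"
        using cInf_lower[OF _ T_bdd] unfolding t_def by force
      then show "cdf M x \<le> c"
        unfolding T_def by simp
    qed simp
  qed simp
  moreover have "measure M {t<..} = measure M (space M) - cdf M t"
    using finite_measure_compl[OF sets_M, of "{..t}"] by (simp add: borel_UNIV cdf_def2 Compl_eq_Diff_UNIV[symmetric])
  moreover have "measure M {t..} = measure M (space M) - measure M {..<t}"
    using finite_measure_compl[OF sets_M, of "{..<t}"] by (simp add: borel_UNIV Compl_eq_Diff_UNIV[symmetric])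
  ultimately show ?thesis
    unfolding c_def by (intro exI[of _ t]) linarith
qed

lemma (in finite_measure) ex_upper_quantile_on:
  fixes R :: "'a \<Rightarrow> real"
  assumes "R \<in> borel_measurable M" and "Measurable.pred M Q"
    and "0 < eps" and "eps < measure M {z \<in> space M. Q z}"
  shows "\<exists>t. measure M {z \<in> space M. Q z \<and> t < R z} \<le> eps
           \<and> eps \<le> measure M {z \<in> space M. Q z \<and> t \<le> R z}"
proof -
  define N where "N = {z \<in> space M. Q z}"
  have N_sets: "N \<in> sets M"
    unfolding N_def using assms(2) by measurable
  let ?D = "distr (restrict_space M N) borel R"
  have "finite_measure ?D"
    by (intro finite_measure.finite_measure_distr finite_measure_restrict_space)
      (auto intro: finite_measure_axioms measurable_restrict_space1 assms(1) N_sets)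
  then interpret D: finite_borel_measure ?D
    by (simp add: finite_borel_measure_def finite_borel_measure_axioms_def)
  have D: "measure ?D A = measure M {z \<in> space M. Q z \<and> R z \<in> A}" if "A \<in> sets borel" for A
  proof -
    have "measure ?D A = measure (restrict_space M N) (R -` A \<inter> N)"
      using that assms(1) N_sets
      by (subst measure_distr) (auto intro: measurable_restrict_space1 simp: space_restrict_space N_def)
    also have "\<dots> = measure M (R -` A \<inter> N)"
      using N_sets by (intro measure_restrict_space) (auto simp: N_def)
    also have "R -` A \<inter> N = {z \<in> space M. Q z \<and> R z \<in> A}"
      by (auto simp: N_def)
    finally show ?thesis .
  qed
  obtain t where "measure ?D {t<..} \<le> eps" "eps \<le> measure ?D {t..}"
    using D.ex_upper_quantile[OF assms(3)] assms(4) D[of UNIV] by (auto simp: D.borel_UNIV)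
  then show ?thesis
    using D[of "{t<..}"] D[of "{t..}"] by auto
qed

theorem theorem1:
  fixes MX :: "'a measure" and P :: "('a \<times> int) measure"
    and f :: "'a \<Rightarrow> real \<Rightarrow> real"
    and nc r :: nat and eps \<delta> :: real
  assumes "prob_space P"
    and "sets P = sets (MX \<Otimes>\<^sub>M count_space {-1, 1})"
    and "scalable_classifier (space MX) f"
    and "\<And>\<rho>. (\<lambda>x. f x \<rho>) \<in> borel_measurable MX"
    and "0 < eps" "eps < 1" "0 < \<delta>" "\<delta> < 1"
    and "1 \<le> r" "r \<le> nc"
    and "binom_cdf (r - 1) nc eps \<le> \<delta>"
  shows "\<exists>A \<in> sets (PiM {..<nc} (\<lambda>_. P)).
           measure (PiM {..<nc} (\<lambda>_. P)) A \<ge> 1 - \<delta> \<and>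
           (\<forall>Z\<in>A. measure P {z \<in> space P. snd z = -1 \<and> fst z \<in> S_eps (space MX) f r nc Z} \<le> eps)"
proof -
  interpret P: prob_space P by fact
  interpret \<Pi>: prob_space "PiM {..<nc} (\<lambda>_. P)" by (rule prob_space_PiM) (rule assms(1))
  have [measurable]: "fst \<in> P \<rightarrow>\<^sub>M MX" "snd \<in> P \<rightarrow>\<^sub>M count_space {-1, 1}"
    using measurable_fst measurable_snd by (simp_all add: measurable_cong_sets[OF assms(2) refl])
  note borel_measurable_rho_bar[OF assms(3,4), measurable]
  let ?bad = "\<lambda>Z. {z \<in> space P. snd z = -1 \<and> fst z \<in> S_eps (space MX) f r nc Z}"
  let ?neg = "\<lambda>t. {z \<in> space P. snd z = -1 \<and> t < rho_bar f (fst z)}"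
  show ?thesis
  proof (cases "measure P {z \<in> space P. snd z = -1} \<le> eps")
    case True
    have "measure P (?bad Z) \<le> measure P {z \<in> space P. snd z = -1}" for Z
      by (rule P.finite_measure_mono) auto
    then show ?thesis
      using True assms(7)
      by (intro bexI[of _ "space (PiM {..<nc} (\<lambda>_. P))"]) (auto simp: \<Pi>.prob_space intro: order_trans)
  next
    case False
    then obtain t where t_gt: "measure P (?neg t) \<le> eps"
      and t_ge: "eps \<le> measure P {z \<in> space P. snd z = -1 \<and> t \<le> rho_bar f (fst z)}"
      using P.ex_upper_quantile_on[of "\<lambda>z. rho_bar f (fst z)" "\<lambda>z. snd z = -1" eps] assms(5)
      by (auto simp: not_le)
    define E where "E = {z \<in> space P. snd z = -1 \<and> t \<le> rho_bar f (fst z)}"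
    let ?A = "{Z \<in> space (PiM {..<nc} (\<lambda>_. P)). r \<le> card {i\<in>{..<nc}. Z i \<in> E}}"
    have "E \<in> sets P"
      unfolding E_def by measurable
    note hits = assms(1) this finite_lessThan assms(9) less_imp_le[OF assms(5)] t_ge[folded E_def]
    have A_sets: "?A \<in> sets (PiM {..<nc} (\<lambda>_. P))"
      and "1 - binom_cdf (r - 1) (card {..<nc}) eps \<le> measure (PiM {..<nc} (\<lambda>_. P)) ?A"
      by (rule sets_PiM_card_hits_ge[OF hits], rule measure_PiM_card_hits_ge[OF hits])
    then have "1 - \<delta> \<le> measure (PiM {..<nc} (\<lambda>_. P)) ?A"
      using assms(11) unfolding card_lessThan by linarith
    moreover have "measure P (?bad Z) \<le> eps" if "Z \<in> ?A" for Z
    proof -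
      have "?bad Z \<subseteq> ?neg t"
        using S_eps_above_threshold[OF assms(3,9), of E t nc Z] that unfolding E_def by blast
      then have "measure P (?bad Z) \<le> measure P (?neg t)"
        by (rule P.finite_measure_mono) measurable
      then show ?thesis
        using t_gt by linarith
    qed
    ultimately show ?thesis
      using A_sets by blast
  qed
qed

end
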